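(* Let $\Gamma\subseteq\mathrm{Aff}(\mathbb{R}^n)$ be an $n$-dimensional crystallographic group whose subgroup of pure translations is exactly $\mathbb{Z}^n$. Then there exists a finite set $\Delta^{base}\subseteq\mathbb{R}^n$, with $\xi_{(d,I_n)}\in\mathrm{Aut}(\Gamma)$ for every $d\in\Delta^{base}$, such that the following holds: whenever $\varphi,\psi\in\mathrm{Aut}(\Gamma)$ satisfy $\varphi|_{\mathbb{Z}^n}=\psi|_{\mathbb{Z}^n}$, there exist $d^{base}\in\Delta^{base}$ and an inner automorphism $\iota$ of $\Gamma$ such that $\psi=\iota\circ\xi_{(d^{base},I_n)}\circ\varphi$.
   Context: $\mathrm{Aff}(\mathbb{R}^n)=\mathbb{R}^n\rtimes\mathrm{GL}_n(\mathbb{R})$ with multiplication $(d_1,D_1)(d_2,D_2)=(d_1+D_1d_2,D_1D_2)$. An $n$-dimensional crystallographic group is a discrete cocompact subgroup of $\mathbb{R}^n\rtimes O(n)$; here it is realised inside $\mathrm{Aff}(\mathbb{R}^n)$ such that $\Gamma\cap\mathbb{R}^n=\{(z,I_n)\mid z\in\mathbb{Z}^n\}$, identified with $\mathbb{Z}^n$; all other elements then have linear part in $\mathrm{GL}_n(\mathbb{Z})$. For $(d,D)\in\mathrm{Aff}(\mathbb{R}^n)$, $\xi_{(d,D)}$ denotes the map $\gamma\mapsto(d,D)\gamma(d,D)^{-1}$. Every automorphism of $\Gamma$ is of the form $\xi_{(d,D)}$ for some $(d,D)\in\mathrm{Aff}(\mathbb{R}^n)$. *)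

theory Defs
  imports "HOL-Analysis.Analysis"
begin

text \<open>Elements of Aff(R^n) are represented as pairs (d, D) with D invertible.\<close>

type_synonym 'n aff = "(real^'n) \<times> (real^'n^'n)"

definition aff_mult :: "'n::finite aff \<Rightarrow> 'n aff \<Rightarrow> 'n aff" where
  "aff_mult g h = (fst g + (snd g *v fst h), snd g ** snd h)"

definition aff_one :: "'n::finite aff" where
  "aff_one = (0, mat 1)"

definition aff_inv :: "'n::finite aff \<Rightarrow> 'n aff" where
  "aff_inv g = (- (matrix_inv (snd g) *v fst g), matrix_inv (snd g))"

definition Aff :: "'n::finite aff set" where
  "Aff = {g. invertible (snd g)}"

definition aff_apply :: "'n::finite aff \<Rightarrow> real^'n \<Rightarrow> real^'n" where
  "aff_apply g x = fst g + (snd g *v x)"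

definition xi :: "'n::finite aff \<Rightarrow> 'n aff \<Rightarrow> 'n aff" where
  "xi g \<gamma> = aff_mult (aff_mult g \<gamma>) (aff_inv g)"

definition aff_subgroup :: "'n::finite aff set \<Rightarrow> bool" where
  "aff_subgroup G \<longleftrightarrow> G \<subseteq> Aff \<and> aff_one \<in> G \<and>
     (\<forall>g\<in>G. \<forall>h\<in>G. aff_mult g h \<in> G) \<and> (\<forall>g\<in>G. aff_inv g \<in> G)"

text \<open>Cocompactness is expressed via a compact set whose translates cover R^n
  (equivalent to compactness of (R^n x| O(n))/Gamma since O(n) is compact).\<close>
definition crystallographic :: "'n::finite aff set \<Rightarrow> bool" where
  "crystallographic G \<longleftrightarrow> aff_subgroup G \<and>
     (\<forall>g\<in>G. orthogonal_matrix (snd g)) \<and>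
     (\<forall>g\<in>G. \<not> g islimpt G) \<and>
     (\<exists>K. compact K \<and> (\<forall>x. \<exists>g\<in>G. \<exists>k\<in>K. x = aff_apply g k))"

definition int_vec :: "real^'n \<Rightarrow> bool" where
  "int_vec z \<longleftrightarrow> (\<forall>i. z $ i \<in> \<int>)"

text \<open>A crystallographic group realised inside Aff(R^n) (i.e. affinely conjugate
  to a crystallographic group) whose pure translations are exactly Z^n.\<close>
definition cryst_group_Zn :: "'n::finite aff set \<Rightarrow> bool" where
  "cryst_group_Zn G \<longleftrightarrow> aff_subgroup G \<and>
     (\<exists>c\<in>Aff. crystallographic (xi c ` G)) \<and>
     {g\<in>G. snd g = mat 1} = {(z, mat 1) | z. int_vec z}"

definition is_aut :: "'n::finite aff set \<Rightarrow> ('n aff \<Rightarrow> 'n aff) \<Rightarrow> bool" where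
  "is_aut G \<phi> \<longleftrightarrow> bij_betw \<phi> G G \<and>
     (\<forall>g\<in>G. \<forall>h\<in>G. \<phi> (aff_mult g h) = aff_mult (\<phi> g) (\<phi> h))"

end

theory Submission
  imports Defs
begin

(* An automorphism of \<Gamma> maps Z^n onto itself, since the translations are exactly the elements
   with finitely many conjugates. Hence \<theta> = \<psi> \<circ> \<phi>\<inverse> fixes Z^n pointwise; it then preserves linear
   parts and adds to the translation part of (a, A) a vector D A, where D is a Z^n-valued cocycle
   on the point group P, which is finite because its elements are integral matrices conjugate to
   orthogonal ones. Averaging over P gives |P| D A = S - A S for S = \<Sum>D, so \<theta> is
   conjugation by the translation v = S / |P|. Splitting v into an integral vector and a
   fractional part d with |P| d integral and 0 \<le> d < 1 writes \<psi> as an inner automorphism after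
   \<xi>_(d, I) \<circ> \<phi>, and there are only finitely many such d. *)

section \<open>Matrices and finite sets of vectors\<close>

lemma matrix_inv_right:
  fixes A :: "'a::semiring_1^'n^'m"
  assumes "invertible A"
  shows "A ** matrix_inv A = mat 1"
  using someI_ex[OF assms[unfolded invertible_def]] by (simp add: matrix_inv_def)

lemma matrix_inv_left:
  fixes A :: "'a::semiring_1^'n^'m"
  assumes "invertible A"
  shows "matrix_inv A ** A = mat 1"
  using someI_ex[OF assms[unfolded invertible_def]] by (simp add: matrix_inv_def)

lemma matrix_inv_mat_1: "matrix_inv (mat 1 :: 'a::semiring_1^'n^'n) = mat 1"
proof -
  have "invertible (mat 1 :: 'a^'n^'n)"
    unfolding invertible_def by (intro exI[of _ "mat 1"]) simp
  from matrix_inv_right[OF this] show ?thesis by simp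
qed

lemma norm_orthogonal_matrix_mult:
  assumes "orthogonal_matrix (Q :: real^'n^'n)"
  shows "norm (Q *v x) = norm x"
proof -
  have "orthogonal_transformation ((*v) Q)"
    using assms by (simp add: orthogonal_transformation_matrix matrix_of_matrix_vector_mul)
  thus ?thesis by (simp add: orthogonal_transformation_norm)
qed

lemma matrix_eq_axis:
  fixes A B :: "real^'n^'m"
  assumes "\<And>j. A *v axis j 1 = B *v axis j 1"
  shows "A = B"
  using assms by (simp add: matrix_vector_mult_basis column_def vec_eq_iff)

lemma bounded_entries_orthogonal_conjugate:
  fixes C :: "real^'n^'n"
  assumes "invertible C"
  shows "\<exists>K. \<forall>A i j. orthogonal_matrix (C ** A ** matrix_inv C) \<longrightarrow> \<bar>A $ i $ j\<bar> \<le> K"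
proof -
  obtain B where B: "\<And>x. norm (matrix_inv C *v x) \<le> B * norm x" "B > 0"
    using linear_bounded_pos[OF matrix_vector_mul_linear[of "matrix_inv C"]] by blast
  have "\<bar>A $ i $ j\<bar> \<le> B * (\<Sum>k\<in>UNIV. norm (C *v axis k 1))"
    if O: "orthogonal_matrix (C ** A ** matrix_inv C)" for A i j
  proof -
    let ?O = "C ** A ** matrix_inv C"
    have "matrix_inv C ** ?O ** C = (matrix_inv C ** C) ** A ** (matrix_inv C ** C)"
      by (simp add: matrix_mul_assoc)
    hence "A = matrix_inv C ** ?O ** C"
      using matrix_inv_left[OF assms] by simp
    hence "A *v axis j 1 = matrix_inv C *v (?O *v (C *v axis j 1))"
      by (metis matrix_vector_mul_assoc)
    moreover have "\<bar>A $ i $ j\<bar> \<le> norm (A *v axis j 1)"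
      using component_le_norm_cart[of "A *v axis j 1" i]
      by (simp add: matrix_vector_mult_basis column_def)
    ultimately have "\<bar>A $ i $ j\<bar> \<le> norm (matrix_inv C *v (?O *v (C *v axis j 1)))"
      by simp
    also have "\<dots> \<le> B * norm (C *v axis j 1)"
      using B(1) norm_orthogonal_matrix_mult[OF O] by metis
    also have "\<dots> \<le> B * (\<Sum>k\<in>UNIV. norm (C *v axis k 1))"
      using B(2) by (intro mult_left_mono member_le_sum) auto
    finally show ?thesis .
  qed
  thus ?thesis by blast
qed

lemma finite_vec_components:
  assumes "finite T"
  shows "finite {x :: 'a^'n::finite. \<forall>i. x $ i \<in> T}"
proof (rule finite_subset)
  show "{x :: 'a^'n. \<forall>i. x $ i \<in> T} \<subseteq> vec_lambda ` PiE UNIV (\<lambda>_. T)"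
  proof
    fix x :: "'a^'n" assume "x \<in> {x. \<forall>i. x $ i \<in> T}"
    hence "(\<lambda>i. x $ i) \<in> PiE UNIV (\<lambda>_. T)" by (auto simp: PiE_iff)
    thus "x \<in> vec_lambda ` PiE UNIV (\<lambda>_. T)" by (intro image_eqI[of _ _ "\<lambda>i. x $ i"]) simp_all
  qed
  show "finite (vec_lambda ` PiE UNIV (\<lambda>_. T))"
    using assms by (intro finite_imageI finite_PiE) auto
qed

lemma finite_bounded_Ints: "finite {x :: real. x \<in> \<int> \<and> \<bar>x\<bar> \<le> K}"
proof (rule finite_subset)
  show "{x :: real. x \<in> \<int> \<and> \<bar>x\<bar> \<le> K} \<subseteq> of_int ` {-\<lceil>K\<rceil>..\<lceil>K\<rceil>}"
  proof
    fix x assume "x \<in> {x :: real. x \<in> \<int> \<and> \<bar>x\<bar> \<le> K}"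
    then obtain m where "x = of_int m" "\<bar>of_int m\<bar> \<le> K" by (auto elim: Ints_cases)
    moreover from this have "m \<in> {-\<lceil>K\<rceil>..\<lceil>K\<rceil>}" by simp linarith
    ultimately show "x \<in> of_int ` {-\<lceil>K\<rceil>..\<lceil>K\<rceil>}" by blast
  qed
qed simp

lemma finite_fractions_of_denominator:
  assumes "N > 0"
  shows "finite {x :: real. of_nat N * x \<in> \<int> \<and> 0 \<le> x \<and> x < 1}"
proof (rule finite_subset)
  show "{x :: real. of_nat N * x \<in> \<int> \<and> 0 \<le> x \<and> x < 1} \<subseteq> (\<lambda>m. of_int m / of_nat N) ` {0..int N}"
  proof
    fix x assume "x \<in> {x :: real. of_nat N * x \<in> \<int> \<and> 0 \<le> x \<and> x < 1}"
    then obtain m where m: "of_nat N * x = of_int m" "0 \<le> x" "x < 1" by (auto elim: Ints_cases)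
    hence "x = of_int m / of_nat N" using assms by (simp add: field_simps)
    moreover have "0 \<le> real N * x" "real N * x \<le> real N"
      using m(2,3) by (simp_all add: mult_left_le)
    hence "m \<in> {0..int N}" using m(1) by simp
    ultimately show "x \<in> (\<lambda>m. of_int m / of_nat N) ` {0..int N}" by blast
  qed
qed simp

lemma int_vec_axis: "int_vec (axis j (1::real))"
  by (simp add: int_vec_def axis_def)

lemma int_vec_minus: "int_vec x \<Longrightarrow> int_vec (- x)"
  by (simp add: int_vec_def)

lemma int_vec_of_nat_scaleR: "int_vec x \<Longrightarrow> int_vec (of_nat k *\<^sub>R x)"
  by (simp add: int_vec_def)

lemma int_vec_sum: "(\<And>x. x \<in> A \<Longrightarrow> int_vec (f x)) \<Longrightarrow> int_vec (\<Sum>x\<in>A. f x)"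
  by (auto simp: int_vec_def sum_component intro: Ints_sum)

text \<open>Reindex the sum over the group by left multiplication with \<open>A\<close>.\<close>
lemma card_scaleR_cocycle_eq_coboundary:
  fixes D :: "real^'n^'n \<Rightarrow> real^'n"
  assumes mult: "\<And>A B. A \<in> P \<Longrightarrow> B \<in> P \<Longrightarrow> A ** B \<in> P"
    and inv: "\<And>A. A \<in> P \<Longrightarrow> invertible A \<and> matrix_inv A \<in> P"
    and cocycle: "\<And>A B. A \<in> P \<Longrightarrow> B \<in> P \<Longrightarrow> D (A ** B) = D A + A *v D B"
    and A: "A \<in> P"
  shows "real (card P) *\<^sub>R D A = sum D P - A *v sum D P"
proof -
  have invA: "matrix_inv A ** A = mat 1" "A ** matrix_inv A = mat 1"
    using inv[OF A] matrix_inv_left matrix_inv_right by blast+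
  have "bij_betw ((**) A) P P"
  proof (rule bij_betwI[where g = "(**) (matrix_inv A)"])
    show "(**) A \<in> P \<rightarrow> P" "(**) (matrix_inv A) \<in> P \<rightarrow> P" using mult inv A by auto
  qed (simp_all add: matrix_mul_assoc invA)
  hence "sum D P = (\<Sum>B\<in>P. D (A ** B))" by (rule sum.reindex_bij_betw[symmetric])
  also have "\<dots> = (\<Sum>B\<in>P. D A + A *v D B)" using cocycle A by simp
  also have "\<dots> = real (card P) *\<^sub>R D A + A *v sum D P"
    by (simp add: sum.distrib vec.sum scaleR_conv_of_real)
  finally show ?thesis by (simp add: eq_diff_eq)
qed

definition unit_cube_grid :: "nat \<Rightarrow> (real^'n::finite) set" where
  "unit_cube_grid N = {d. \<forall>i. of_nat N * d $ i \<in> \<int> \<and> 0 \<le> d $ i \<and> d $ i < 1}"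

lemma finite_unit_cube_grid: "N > 0 \<Longrightarrow> finite (unit_cube_grid N)"
  unfolding unit_cube_grid_def using finite_vec_components[OF finite_fractions_of_denominator] by simp

lemma diff_floor_mem_unit_cube_grid:
  assumes "int_vec (real N *\<^sub>R v)"
  shows "v - (\<chi> i. of_int \<lfloor>v $ i\<rfloor>) \<in> unit_cube_grid N"
  unfolding unit_cube_grid_def
proof (intro CollectI allI conjI)
  fix i
  have "real N * (v - (\<chi> i. of_int \<lfloor>v $ i\<rfloor>)) $ i = (real N *\<^sub>R v) $ i - of_int (int N * \<lfloor>v $ i\<rfloor>)"
    by (simp add: algebra_simps)
  thus "real N * (v - (\<chi> i. of_int \<lfloor>v $ i\<rfloor>)) $ i \<in> \<int>"
    using assms by (simp add: int_vec_def)
  show "0 \<le> (v - (\<chi> i. of_int \<lfloor>v $ i\<rfloor>)) $ i" "(v - (\<chi> i. of_int \<lfloor>v $ i\<rfloor>)) $ i < 1"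
    by simp_all linarith
qed

section \<open>Affine maps and automorphisms\<close>

lemma aff_mult_Pair [simp]: "aff_mult (a, A) (b, B) = (a + A *v b, A ** B)"
  by (simp add: aff_mult_def)

lemma aff_conj_translation:
  assumes "invertible A"
  shows "aff_mult (aff_mult (a, A) (w, mat 1)) (aff_inv (a, A)) = (A *v w, mat 1)"
  using matrix_inv_right[OF assms]
  by (simp add: aff_inv_def vec.neg matrix_vector_mul_assoc algebra_simps)

lemma aff_mult_inv_same_linear_part:
  assumes "invertible A"
  shows "aff_mult (b, A) (aff_inv (a, A)) = (b - a, mat 1)"
  using matrix_inv_right[OF assms] by (simp add: aff_inv_def vec.neg matrix_vector_mul_assoc)

lemma snd_xi: "snd (xi (c, C) (a, A)) = C ** A ** matrix_inv C"
  by (simp add: xi_def aff_inv_def)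

lemma xi_translation: "xi (u, mat 1) (a, A) = (a + u - A *v u, A)"
  by (simp add: xi_def aff_inv_def matrix_inv_mat_1 vec.neg algebra_simps)

lemma xi_translation_add: "xi (u + v, mat 1) \<eta> = xi (u, mat 1) (xi (v, mat 1) \<eta>)"
  by (cases \<eta>) (simp add: xi_translation matrix_vector_right_distrib algebra_simps)

lemma xi_translation_hom: "xi (u, mat 1) (aff_mult g h) = aff_mult (xi (u, mat 1) g) (xi (u, mat 1) h)"
  by (cases g; cases h) (simp add: xi_translation matrix_vector_mul_assoc algebra_simps)

lemma is_aut_cong:
  assumes "aff_subgroup G" "\<And>g. g \<in> G \<Longrightarrow> \<phi> g = \<psi> g" "is_aut G \<phi>"
  shows "is_aut G \<psi>"
  using assms bij_betw_cong[of G \<phi> \<psi> G] unfolding is_aut_def aff_subgroup_def by simp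

lemma is_aut_comp:
  assumes \<phi>: "is_aut G \<phi>" and \<psi>: "is_aut G \<psi>"
  shows "is_aut G (\<psi> \<circ> \<phi>)"
  unfolding is_aut_def
proof (intro conjI ballI)
  show "bij_betw (\<psi> \<circ> \<phi>) G G"
    using \<phi> \<psi> unfolding is_aut_def by (blast intro: bij_betw_trans)
  fix g h assume "g \<in> G" "h \<in> G"
  moreover from this have "\<phi> g \<in> G" "\<phi> h \<in> G"
    using \<phi> unfolding is_aut_def by (blast dest: bij_betwE)+
  ultimately show "(\<psi> \<circ> \<phi>) (aff_mult g h) = aff_mult ((\<psi> \<circ> \<phi>) g) ((\<psi> \<circ> \<phi>) h)"
    using \<phi> \<psi> unfolding is_aut_def by simp
qed

lemma is_aut_inv_into:
  assumes G: "aff_subgroup G" and \<phi>: "is_aut G \<phi>"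
  shows "is_aut G (inv_into G \<phi>)"
  unfolding is_aut_def
proof (intro conjI ballI)
  have bij: "bij_betw \<phi> G G" using \<phi> by (simp add: is_aut_def)
  thus "bij_betw (inv_into G \<phi>) G G" by (rule bij_betw_inv_into)
  fix x y assume xy: "x \<in> G" "y \<in> G"
  let ?x = "inv_into G \<phi> x" and ?y = "inv_into G \<phi> y"
  have inG: "?x \<in> G" "?y \<in> G"
    using xy bij_betwE[OF bij_betw_inv_into[OF bij]] by blast+
  have "\<phi> (aff_mult ?x ?y) = aff_mult x y"
    using \<phi> inG xy bij_betw_inv_into_right[OF bij] by (simp add: is_aut_def)
  moreover have "aff_mult ?x ?y \<in> G" using G inG by (simp add: aff_subgroup_def)
  ultimately show "inv_into G \<phi> (aff_mult x y) = aff_mult ?x ?y"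
    using bij_betw_inv_into_left[OF bij] by metis
qed

definition conjugates :: "'n::finite aff set \<Rightarrow> 'n aff \<Rightarrow> 'n aff set" where
  "conjugates G y = {u \<in> G. \<exists>k\<in>G. aff_mult k y = aff_mult u k}"

lemma is_aut_image_conjugates:
  assumes \<phi>: "is_aut G \<phi>" and x: "x \<in> G"
  shows "\<phi> ` conjugates G x \<subseteq> conjugates G (\<phi> x)"
proof
  fix v assume "v \<in> \<phi> ` conjugates G x"
  then obtain u k where u: "v = \<phi> u" "u \<in> G" "k \<in> G" "aff_mult k x = aff_mult u k"
    by (auto simp: conjugates_def)
  have "aff_mult (\<phi> k) (\<phi> x) = aff_mult (\<phi> u) (\<phi> k)"
    using \<phi> u x by (metis is_aut_def)
  moreover have "\<phi> k \<in> G" "\<phi> u \<in> G"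
    using \<phi> u unfolding is_aut_def by (blast dest: bij_betwE)+
  ultimately show "v \<in> conjugates G (\<phi> x)" using u by (auto simp: conjugates_def)
qed

section \<open>Groups whose translations form Z^n\<close>

abbreviation point_group :: "'n::finite aff set \<Rightarrow> (real^'n^'n) set" where
  "point_group G \<equiv> snd ` G"

locale translation_lattice_group =
  fixes \<Gamma> :: "'n::finite aff set"
  assumes subgroup: "aff_subgroup \<Gamma>"
    and translation_mem_iff: "(z, mat 1) \<in> \<Gamma> \<longleftrightarrow> int_vec z"
begin

lemma mult_mem: "g \<in> \<Gamma> \<Longrightarrow> h \<in> \<Gamma> \<Longrightarrow> aff_mult g h \<in> \<Gamma>"
  using subgroup by (simp add: aff_subgroup_def)

lemma inv_mem: "g \<in> \<Gamma> \<Longrightarrow> aff_inv g \<in> \<Gamma>"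
  using subgroup by (simp add: aff_subgroup_def)

lemma invertible_linear_part: "(a, A) \<in> \<Gamma> \<Longrightarrow> invertible A"
  using subgroup by (auto simp: aff_subgroup_def Aff_def)

lemma int_vec_linear_part_mult:
  assumes "(a, A) \<in> \<Gamma>" "int_vec w"
  shows "int_vec (A *v w)"
proof -
  have "aff_mult (aff_mult (a, A) (w, mat 1)) (aff_inv (a, A)) \<in> \<Gamma>"
    using assms translation_mem_iff by (intro mult_mem inv_mem) auto
  thus ?thesis
    using aff_conj_translation[OF invertible_linear_part[OF assms(1)]] translation_mem_iff by simp
qed

lemma linear_part_entry_Ints: "(a, A) \<in> \<Gamma> \<Longrightarrow> A $ i $ j \<in> \<int>"
  using int_vec_linear_part_mult[OF _ int_vec_axis, of a A j]
  by (simp add: int_vec_def matrix_vector_mult_basis column_def)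

lemma int_vec_translation_diff:
  assumes "(a, A) \<in> \<Gamma>" "(b, A) \<in> \<Gamma>"
  shows "int_vec (b - a)"
  using mult_mem[OF assms(2) inv_mem[OF assms(1)]] translation_mem_iff
    aff_mult_inv_same_linear_part[OF invertible_linear_part[OF assms(1)]] by simp

lemma finite_point_group_if_orthogonal_conjugate:
  assumes "(c, C) \<in> Aff" "\<And>g. g \<in> \<Gamma> \<Longrightarrow> orthogonal_matrix (snd (xi (c, C) g))"
  shows "finite (point_group \<Gamma>)"
proof -
  obtain K where K: "\<And>A i j. orthogonal_matrix (C ** A ** matrix_inv C) \<Longrightarrow> \<bar>A $ i $ j\<bar> \<le> K"
    using bounded_entries_orthogonal_conjugate[of C] assms(1) by (auto simp: Aff_def)
  have "point_group \<Gamma> \<subseteq> {M. \<forall>i. M $ i \<in> {x. \<forall>j. x $ j \<in> {x :: real. x \<in> \<int> \<and> \<bar>x\<bar> \<le> K}}}"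
    using K assms(2) linear_part_entry_Ints by (force simp: snd_xi)
  moreover have "finite {M :: real^'n^'n. \<forall>i. M $ i \<in> {x. \<forall>j. x $ j \<in> {x :: real. x \<in> \<int> \<and> \<bar>x\<bar> \<le> K}}}"
    by (intro finite_vec_components finite_bounded_Ints)
  ultimately show ?thesis by (rule finite_subset)
qed

lemma xi_int_translation_mem:
  assumes "int_vec u" "\<eta> \<in> \<Gamma>"
  shows "xi (u, mat 1) \<eta> \<in> \<Gamma>"
  unfolding xi_def using assms translation_mem_iff by (intro mult_mem inv_mem) auto

lemma is_aut_xi_int_translation:
  assumes "int_vec u"
  shows "is_aut \<Gamma> (xi (u, mat 1))"
  unfolding is_aut_def
proof (intro conjI ballI xi_translation_hom)
  have "xi (u, mat 1) (xi (- u, mat 1) \<eta>) = \<eta>" for \<eta>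
    using xi_translation_add[of u "- u" \<eta>] by (cases \<eta>) (simp add: xi_translation)
  moreover have "xi (- u, mat 1) (xi (u, mat 1) \<eta>) = \<eta>" for \<eta>
    using xi_translation_add[of "- u" u \<eta>] by (cases \<eta>) (simp add: xi_translation)
  moreover note xi_int_translation_mem[OF assms] xi_int_translation_mem[OF int_vec_minus[OF assms]]
  ultimately show "bij_betw (xi (u, mat 1)) \<Gamma> \<Gamma>"
    by (intro bij_betwI[where g = "xi (- u, mat 1)"]) blast+
qed

text \<open>An element with nontrivial linear part \<open>A\<close> is moved along the line through \<open>a\<close> in the
  direction \<open>e - A e\<close> by conjugation with the integer multiples of a suitable basis vector \<open>e\<close>.\<close>
lemma infinite_conjugates:
  assumes \<eta>: "(a, A) \<in> \<Gamma>" and A: "A \<noteq> mat 1"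
  shows "infinite (conjugates \<Gamma> (a, A))"
proof -
  obtain j where "A *v axis j 1 \<noteq> axis j 1"
    using A matrix_eq_axis[of A "mat 1"] by auto
  define e :: "real^'n" where "e = axis j 1"
  define f where "f k = (a + of_nat k *\<^sub>R (e - A *v e), A)" for k :: nat
  have "e - A *v e \<noteq> 0" using \<open>A *v axis j 1 \<noteq> axis j 1\<close> e_def by simp
  hence "inj f" by (auto intro!: injI simp: f_def)
  moreover have "f k \<in> conjugates \<Gamma> (a, A)" for k
  proof -
    define z where "z = of_nat k *\<^sub>R e"
    have z: "(z, mat 1) \<in> \<Gamma>" "(- z, mat 1) \<in> \<Gamma>"
      unfolding z_def e_def using translation_mem_iff int_vec_of_nat_scaleR int_vec_axis int_vec_minus
      by blast+
    have "f k = aff_mult (aff_mult (z, mat 1) (a, A)) (- z, mat 1)"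
      by (simp add: f_def z_def vec.neg matrix_vector_mult_scaleR algebra_simps)
    moreover have "aff_mult (aff_mult (z, mat 1) (a, A)) (- z, mat 1) \<in> \<Gamma>"
      using z \<eta> by (intro mult_mem)
    ultimately have "f k \<in> \<Gamma>" by simp
    moreover have "aff_mult (z, mat 1) (a, A) = aff_mult (f k) (z, mat 1)"
      by (simp add: f_def z_def matrix_vector_mult_scaleR algebra_simps)
    ultimately show ?thesis using z unfolding conjugates_def by blast
  qed
  ultimately show ?thesis by (meson infinite_super range_inj_infinite image_subsetI)
qed

lemma aut_fixing_translations_linear_part:
  assumes \<theta>: "is_aut \<Gamma> \<theta>" and transl: "\<And>w. int_vec w \<Longrightarrow> \<theta> (w, mat 1) = (w, mat 1)"
    and \<eta>: "(a, A) \<in> \<Gamma>"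
  shows "snd (\<theta> (a, A)) = A"
proof -
  obtain b B where bB: "\<theta> (a, A) = (b, B)" by (cases "\<theta> (a, A)")
  have "B *v w = A *v w" if w: "int_vec w" for w
  proof -
    have "(a, A) \<in> \<Gamma>" "(w, mat 1) \<in> \<Gamma>" "(A *v w, mat 1) \<in> \<Gamma>"
      using \<eta> w int_vec_linear_part_mult translation_mem_iff by auto
    moreover have "aff_mult (a, A) (w, mat 1) = aff_mult (A *v w, mat 1) (a, A)"
      by (simp add: add.commute)
    ultimately have "aff_mult (b, B) (w, mat 1) = aff_mult (A *v w, mat 1) (b, B)"
      using \<theta> transl bB w int_vec_linear_part_mult[OF \<eta> w] unfolding is_aut_def by metis
    thus ?thesis by simp
  qed
  hence "B = A" using matrix_eq_axis int_vec_axis by blast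
  thus ?thesis using bB by simp
qed

lemma aut_fixing_translations_shift:
  assumes \<theta>: "is_aut \<Gamma> \<theta>" and transl: "\<And>w. int_vec w \<Longrightarrow> \<theta> (w, mat 1) = (w, mat 1)"
  obtains D where "\<And>a A. (a, A) \<in> \<Gamma> \<Longrightarrow> \<theta> (a, A) = (a + D A, A)"
proof
  define r where "r A = fst (SOME \<eta>. \<eta> \<in> \<Gamma> \<and> snd \<eta> = A)" for A
  fix a A assume \<eta>: "(a, A) \<in> \<Gamma>"
  have "\<exists>\<eta>. \<eta> \<in> \<Gamma> \<and> snd \<eta> = A" using \<eta> by force
  hence r: "(r A, A) \<in> \<Gamma>" unfolding r_def by (metis (mono_tags, lifting) prod.collapse someI_ex)
  have t: "int_vec (a - r A)" by (rule int_vec_translation_diff[OF r \<eta>])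
  have "\<theta> (a, A) = \<theta> (aff_mult (a - r A, mat 1) (r A, A))" by simp
  also have "\<dots> = aff_mult (a - r A, mat 1) (\<theta> (r A, A))"
    using \<theta> transl t r translation_mem_iff unfolding is_aut_def by metis
  also have "\<theta> (r A, A) = (fst (\<theta> (r A, A)), A)"
    using aut_fixing_translations_linear_part[OF \<theta> transl r] by (metis prod.collapse)
  finally show "\<theta> (a, A) = (a + (fst (\<theta> (r A, A)) - r A), A)" by (simp add: algebra_simps)
qed

end

locale finite_point_group_lattice = translation_lattice_group +
  assumes finite_point_group: "finite (point_group \<Gamma>)"
begin

lemma card_point_group_pos: "card (point_group \<Gamma>) > 0"
proof -
  have "(0, mat 1) \<in> \<Gamma>" using translation_mem_iff by (simp add: int_vec_def)
  hence "mat 1 \<in> point_group \<Gamma>" by force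
  thus ?thesis using finite_point_group card_gt_0_iff by blast
qed

lemma finite_conjugates_translation: "finite (conjugates \<Gamma> (w, mat 1))"
proof (rule finite_subset)
  show "conjugates \<Gamma> (w, mat 1) \<subseteq> (\<lambda>A. (A *v w, mat 1)) ` point_group \<Gamma>"
  proof
    fix u assume "u \<in> conjugates \<Gamma> (w, mat 1)"
    then obtain k where "k \<in> \<Gamma>" "aff_mult k (w, mat 1) = aff_mult u k"
      unfolding conjugates_def by blast
    moreover obtain a A c C where "k = (a, A)" "u = (c, C)" by (cases k, cases u)
    ultimately have k: "(a, A) \<in> \<Gamma>" and u: "u = (c, C)"
      and eq: "aff_mult (a, A) (w, mat 1) = aff_mult (c, C) (a, A)" by simp_all
    have "A = C ** A" using eq by simp
    hence "A ** matrix_inv A = C ** (A ** matrix_inv A)" by (metis matrix_mul_assoc)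
    hence "C = mat 1" using matrix_inv_right[OF invertible_linear_part[OF k]] by simp
    hence "u = (A *v w, mat 1)" using eq u by (simp add: algebra_simps)
    thus "u \<in> (\<lambda>A. (A *v w, mat 1)) ` point_group \<Gamma>" using k by force
  qed
qed (use finite_point_group in simp)

lemma aut_preimage_translation:
  assumes \<phi>: "is_aut \<Gamma> \<phi>" and x: "x \<in> \<Gamma>" and \<phi>x: "\<phi> x = (w, mat 1)"
  shows "snd x = mat 1"
proof (rule ccontr)
  assume "snd x \<noteq> mat 1"
  hence "infinite (conjugates \<Gamma> x)" using infinite_conjugates[of "fst x" "snd x"] x by simp
  moreover have "inj_on \<phi> (conjugates \<Gamma> x)"
    using \<phi> inj_on_subset[of \<phi> \<Gamma> "conjugates \<Gamma> x"]
    unfolding is_aut_def bij_betw_def conjugates_def by blast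
  ultimately have "infinite (\<phi> ` conjugates \<Gamma> x)" using finite_imageD by blast
  moreover have "\<phi> ` conjugates \<Gamma> x \<subseteq> conjugates \<Gamma> (w, mat 1)"
    using is_aut_image_conjugates[OF \<phi> x] \<phi>x by simp
  ultimately show False using finite_conjugates_translation finite_subset by blast
qed

lemma aut_agreeing_on_translations:
  assumes \<phi>: "is_aut \<Gamma> \<phi>" and \<psi>: "is_aut \<Gamma> \<psi>"
    and agree: "\<And>z. int_vec z \<Longrightarrow> \<phi> (z, mat 1) = \<psi> (z, mat 1)"
  shows "is_aut \<Gamma> (\<psi> \<circ> inv_into \<Gamma> \<phi>)"
    and "\<And>w. int_vec w \<Longrightarrow> (\<psi> \<circ> inv_into \<Gamma> \<phi>) (w, mat 1) = (w, mat 1)"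
proof -
  show "is_aut \<Gamma> (\<psi> \<circ> inv_into \<Gamma> \<phi>)"
    using is_aut_comp[OF is_aut_inv_into[OF subgroup \<phi>] \<psi>] .
  show "(\<psi> \<circ> inv_into \<Gamma> \<phi>) (w, mat 1) = (w, mat 1)" if "int_vec w" for w
  proof -
    have w: "(w, mat 1) \<in> \<Gamma>" using that translation_mem_iff by simp
    have bij: "bij_betw \<phi> \<Gamma> \<Gamma>" using \<phi> by (simp add: is_aut_def)
    define x where "x = inv_into \<Gamma> \<phi> (w, mat 1)"
    have x: "x \<in> \<Gamma>" "\<phi> x = (w, mat 1)"
      unfolding x_def using w bij_betwE[OF bij_betw_inv_into[OF bij]] bij_betw_inv_into_right[OF bij]
      by blast+
    hence "x = (fst x, mat 1)" using aut_preimage_translation[OF \<phi>] by (metis prod.collapse)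
    hence "\<psi> x = \<phi> x" using x(1) agree translation_mem_iff by metis
    thus ?thesis using x unfolding x_def by simp
  qed
qed

lemma aut_fixing_translations_eq_xi:
  assumes \<theta>: "is_aut \<Gamma> \<theta>" and transl: "\<And>w. int_vec w \<Longrightarrow> \<theta> (w, mat 1) = (w, mat 1)"
  obtains v where "int_vec (real (card (point_group \<Gamma>)) *\<^sub>R v)"
    and "\<And>\<eta>. \<eta> \<in> \<Gamma> \<Longrightarrow> \<theta> \<eta> = xi (v, mat 1) \<eta>"
proof -
  let ?P = "point_group \<Gamma>" and ?N = "real (card (point_group \<Gamma>))"
  obtain D where D: "\<And>a A. (a, A) \<in> \<Gamma> \<Longrightarrow> \<theta> (a, A) = (a + D A, A)"
    using aut_fixing_translations_shift[OF \<theta> transl] by blast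
  have hom: "\<And>g h. g \<in> \<Gamma> \<Longrightarrow> h \<in> \<Gamma> \<Longrightarrow> \<theta> (aff_mult g h) = aff_mult (\<theta> g) (\<theta> h)"
    using \<theta> by (simp add: is_aut_def)
  have D_int: "int_vec (D A)" if "A \<in> ?P" for A
  proof -
    obtain a where a: "(a, A) \<in> \<Gamma>" using \<open>A \<in> ?P\<close> by force
    hence "(a + D A, A) \<in> \<Gamma>" using \<theta> D[OF a] unfolding is_aut_def by (metis bij_betwE)
    from int_vec_translation_diff[OF a this] show ?thesis by simp
  qed
  have mult: "A ** B \<in> ?P" if "A \<in> ?P" "B \<in> ?P" for A B
    using that mult_mem by (force simp: image_iff)
  have inv: "invertible A \<and> matrix_inv A \<in> ?P" if "A \<in> ?P" for A
    using that invertible_linear_part inv_mem by (force simp: image_iff aff_inv_def)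
  have cocycle: "D (A ** B) = D A + A *v D B" if AB: "A \<in> ?P" "B \<in> ?P" for A B
  proof -
    obtain a b where ab: "(a, A) \<in> \<Gamma>" "(b, B) \<in> \<Gamma>" using AB by force
    have "(a + A *v b + D (A ** B), A ** B) = aff_mult (a + D A, A) (b + D B, B)"
      using hom[OF ab] D[OF ab(1)] D[OF ab(2)] D[of "a + A *v b" "A ** B"] mult_mem[OF ab] by simp
    thus ?thesis by (simp add: matrix_vector_right_distrib algebra_simps)
  qed
  define v where "v = inverse ?N *\<^sub>R sum D ?P"
  have "?N *\<^sub>R v = sum D ?P" using card_point_group_pos by (simp add: v_def)
  hence v_int: "int_vec (?N *\<^sub>R v)" using int_vec_sum[of ?P D] D_int by simp
  have "\<theta> \<eta> = xi (v, mat 1) \<eta>" if "\<eta> \<in> \<Gamma>" for \<eta>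
  proof -
    obtain a A where \<eta>: "\<eta> = (a, A)" "(a, A) \<in> \<Gamma>" using \<open>\<eta> \<in> \<Gamma>\<close> by (cases \<eta>) simp
    have "A \<in> ?P" using \<eta>(2) by force
    with mult inv cocycle have "?N *\<^sub>R D A = sum D ?P - A *v sum D ?P"
      by (rule card_scaleR_cocycle_eq_coboundary)
    also have "\<dots> = ?N *\<^sub>R (v - A *v v)"
      unfolding \<open>?N *\<^sub>R v = sum D ?P\<close>[symmetric]
      by (simp add: scaleR_right_diff_distrib matrix_vector_mult_scaleR)
    finally have "D A = v - A *v v" using card_point_group_pos by simp
    thus ?thesis using D[OF \<eta>(2)] \<eta>(1) by (simp add: xi_translation algebra_simps)
  qed
  with v_int that show ?thesis by blast
qed

lemma aut_fixing_translations_decomposition: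
  assumes \<theta>: "is_aut \<Gamma> \<theta>" and transl: "\<And>w. int_vec w \<Longrightarrow> \<theta> (w, mat 1) = (w, mat 1)"
  obtains d z where "d \<in> unit_cube_grid (card (point_group \<Gamma>))" "int_vec z"
    and "is_aut \<Gamma> (xi (d, mat 1))"
    and "\<And>\<eta>. \<eta> \<in> \<Gamma> \<Longrightarrow> \<theta> \<eta> = xi (z, mat 1) (xi (d, mat 1) \<eta>)"
proof -
  obtain v where v: "int_vec (real (card (point_group \<Gamma>)) *\<^sub>R v)"
    and \<theta>v: "\<And>\<eta>. \<eta> \<in> \<Gamma> \<Longrightarrow> \<theta> \<eta> = xi (v, mat 1) \<eta>"
    using aut_fixing_translations_eq_xi[OF \<theta> transl] by blast
  define z :: "real^'a" where "z = (\<chi> i. of_int \<lfloor>v $ i\<rfloor>)"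
  define d where "d = v - z"
  have z: "int_vec z" by (simp add: int_vec_def z_def)
  have \<theta>_decomp: "\<theta> \<eta> = xi (z, mat 1) (xi (d, mat 1) \<eta>)" if "\<eta> \<in> \<Gamma>" for \<eta>
    using \<theta>v[OF that] xi_translation_add[of z d \<eta>] by (simp add: d_def)
  have "xi (d, mat 1) \<eta> = (xi (- z, mat 1) \<circ> \<theta>) \<eta>" if "\<eta> \<in> \<Gamma>" for \<eta>
    using \<theta>_decomp[OF that] xi_translation_add[of "- z" z]
    by (cases "xi (d, mat 1) \<eta>") (simp add: xi_translation vec.neg)
  hence "is_aut \<Gamma> (xi (d, mat 1))"
    using is_aut_cong[OF subgroup] is_aut_comp[OF \<theta> is_aut_xi_int_translation[OF int_vec_minus[OF z]]]
    by metis
  moreover have "d \<in> unit_cube_grid (card (point_group \<Gamma>))"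
    unfolding d_def z_def by (rule diff_floor_mem_unit_cube_grid[OF v])
  ultimately show ?thesis using that z \<theta>_decomp by blast
qed

lemma aut_agreeing_on_translations_decomposition:
  assumes \<phi>: "is_aut \<Gamma> \<phi>" and \<psi>: "is_aut \<Gamma> \<psi>"
    and agree: "\<And>z. int_vec z \<Longrightarrow> \<phi> (z, mat 1) = \<psi> (z, mat 1)"
  obtains d z where "d \<in> unit_cube_grid (card (point_group \<Gamma>))" "int_vec z"
    and "is_aut \<Gamma> (xi (d, mat 1))"
    and "\<And>\<gamma>. \<gamma> \<in> \<Gamma> \<Longrightarrow> \<psi> \<gamma> = xi (z, mat 1) (xi (d, mat 1) (\<phi> \<gamma>))"
proof -
  obtain d z where "d \<in> unit_cube_grid (card (point_group \<Gamma>))" "int_vec z"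
    and "is_aut \<Gamma> (xi (d, mat 1))" and \<theta>: "\<And>\<eta>. \<eta> \<in> \<Gamma> \<Longrightarrow>
      (\<psi> \<circ> inv_into \<Gamma> \<phi>) \<eta> = xi (z, mat 1) (xi (d, mat 1) \<eta>)"
    using aut_fixing_translations_decomposition[OF aut_agreeing_on_translations[OF \<phi> \<psi> agree]]
    by blast
  moreover have "\<psi> \<gamma> = xi (z, mat 1) (xi (d, mat 1) (\<phi> \<gamma>))" if "\<gamma> \<in> \<Gamma>" for \<gamma>
  proof -
    have "\<phi> \<gamma> \<in> \<Gamma>" "inv_into \<Gamma> \<phi> (\<phi> \<gamma>) = \<gamma>"
      using that \<phi> unfolding is_aut_def bij_betw_def by (auto simp: inv_into_f_f)
    thus ?thesis using \<theta>[of "\<phi> \<gamma>"] by simp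
  qed
  ultimately show ?thesis using that by blast
qed

end

lemma finite_point_group_lattice_if_cryst_group_Zn:
  assumes "cryst_group_Zn \<Gamma>"
  shows "finite_point_group_lattice \<Gamma>"
proof -
  have sub: "aff_subgroup \<Gamma>"
    and T: "{g \<in> \<Gamma>. snd g = mat 1} = {(z, mat 1) | z. int_vec z}"
    using assms by (simp_all add: cryst_group_Zn_def)
  have "(z, mat 1) \<in> \<Gamma> \<longleftrightarrow> (z, mat 1) \<in> {g \<in> \<Gamma>. snd g = mat 1}" for z by simp
  hence lattice: "translation_lattice_group \<Gamma>"
    using sub unfolding T by unfold_locales auto
  obtain c C where "(c, C) \<in> Aff" "crystallographic (xi (c, C) ` \<Gamma>)"
    using assms by (auto simp: cryst_group_Zn_def)
  hence "finite (point_group \<Gamma>)"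
    using translation_lattice_group.finite_point_group_if_orthogonal_conjugate[OF lattice]
    by (auto simp: crystallographic_def)
  thus ?thesis
    using lattice by (simp add: finite_point_group_lattice_def finite_point_group_lattice_axioms_def)
qed

theorem corollary5p4:
  fixes \<Gamma> :: "'n::finite aff set"
  assumes "cryst_group_Zn \<Gamma>"
  shows "\<exists>\<Delta>. finite \<Delta> \<and> (\<forall>d\<in>\<Delta>. is_aut \<Gamma> (xi (d, mat 1))) \<and>
    (\<forall>\<phi> \<psi>. is_aut \<Gamma> \<phi> \<and> is_aut \<Gamma> \<psi> \<and>
        (\<forall>z. int_vec z \<longrightarrow> \<phi> (z, mat 1) = \<psi> (z, mat 1)) \<longrightarrow>
      (\<exists>d\<in>\<Delta>. \<exists>g\<in>\<Gamma>. \<forall>\<gamma>\<in>\<Gamma>. \<psi> \<gamma> = xi g (xi (d, mat 1) (\<phi> \<gamma>))))"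
proof -
  interpret finite_point_group_lattice \<Gamma>
    using assms by (rule finite_point_group_lattice_if_cryst_group_Zn)
  define \<Delta> where "\<Delta> = {d \<in> unit_cube_grid (card (point_group \<Gamma>)). is_aut \<Gamma> (xi (d, mat 1))}"
  show ?thesis
  proof (intro exI[of _ \<Delta>] conjI allI impI ballI)
    show "finite \<Delta>"
      unfolding \<Delta>_def by (rule finite_subset[OF _ finite_unit_cube_grid[OF card_point_group_pos]]) blast
    show "is_aut \<Gamma> (xi (d, mat 1))" if "d \<in> \<Delta>" for d
      using that by (simp add: \<Delta>_def)
    fix \<phi> \<psi>
    assume "is_aut \<Gamma> \<phi> \<and> is_aut \<Gamma> \<psi> \<and> (\<forall>z. int_vec z \<longrightarrow> \<phi> (z, mat 1) = \<psi> (z, mat 1))"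
    then obtain d z where "d \<in> unit_cube_grid (card (point_group \<Gamma>))" and z: "int_vec z"
      and "is_aut \<Gamma> (xi (d, mat 1))"
      and "\<And>\<gamma>. \<gamma> \<in> \<Gamma> \<Longrightarrow> \<psi> \<gamma> = xi (z, mat 1) (xi (d, mat 1) (\<phi> \<gamma>))"
      using aut_agreeing_on_translations_decomposition by metis
    moreover have "d \<in> \<Delta>" "(z, mat 1) \<in> \<Gamma>"
      using \<open>d \<in> unit_cube_grid _\<close> \<open>is_aut \<Gamma> (xi (d, mat 1))\<close> z translation_mem_iff
      by (simp_all add: \<Delta>_def)
    ultimately show "\<exists>d\<in>\<Delta>. \<exists>g\<in>\<Gamma>. \<forall>\<gamma>\<in>\<Gamma>. \<psi> \<gamma> = xi g (xi (d, mat 1) (\<phi> \<gamma>))" by blast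
  qed
qed

end
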